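(* Consider the Floer triple $(\mathcal{C},f,m)$ over $\mathbb{Z}$ with $\mathcal{C}=\{\overline{c}_n:n\ge0\}\cup\{\underline{c}_n:n\ge1\}$, $f(\overline{c}_n)=-n$, $f(\underline{c}_n)=-n-1$, and whose only nonzero values of $m$ are $m(\underline{c}_n,\overline{c}_{n-1})=1$ and $m(\underline{c}_n,\overline{c}_n)=-2$ for $n\ge1$. Then, computing with integer coefficients, $\overline{HM}=\varinjlim_{b\to\infty}\varprojlim_{a\to-\infty}HM_a^b=0$, whereas the Novikov homology $HM\neq0$. In particular $HM$ and $\overline{HM}$ are not isomorphic.
   Context: A Floer triple over $\mathbb{Z}$: a set $\mathcal{C}$, $f\colon\mathcal{C}\to\mathbb{R}$, $m\colon\mathcal{C}\times\mathcal{C}\to\mathbb{Z}$ with (i) $\mathcal{C}_a^b=\{c: a\le f(c)\le b\}$ finite for all $a\le b$; (ii) $m(c_1,c_2)\ne0\Rightarrow f(c_1)<f(c_2)$; (iii) $\sum_{c_2}m(c_1,c_2)m(c_2,c_3)=0$ for all $c_1,c_3$. $CM_a^b$ is the free abelian group on $\mathcal{C}_a^b$ (zero if $a>b$), $\partial_a^b c=\sum_{c'\in\mathcal{C}_a^b}m(c',c)c'$, $HM_a^b$ its homology. For $a_1\le a_2$, $p^b_{a_2,a_1}\colon CM^b_{a_1}\to CM^b_{a_2}$ sends $c\mapsto c$ if $f(c)\ge a_2$ and to $0$ otherwise; for $b_1\le b_2$, $i_a^{b_2,b_1}$ is the inclusion; $Hp,Hi$ are the induced maps. $\varprojlim_a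 HM_a^b$ is the group of families $(x_a)_{a}$ with $Hp^b_{a_2,a_1}x_{a_1}=x_{a_2}$; the direct limit over $b$ is taken with respect to the maps induced componentwise by $Hi$. The Novikov complex consists of formal sums $\sum_{c}\gamma_c c$, $\gamma_c\in\mathbb{Z}$, with $\{c:\gamma_c\ne0,f(c)>b\}$ finite for all $b$, and $\partial\sum\gamma_c c=\sum_c\gamma_c\sum_{c'}m(c',c)c'$; $HM$ is its homology. *)

theory Defs
  imports Complex_Main
begin

definition floer_triple :: "'c set \<Rightarrow> ('c \<Rightarrow> real) \<Rightarrow> ('c \<Rightarrow> 'c \<Rightarrow> int) \<Rightarrow> bool" where
  "floer_triple C f m \<longleftrightarrow>
     (\<forall>a b. a \<le> b \<longrightarrow> finite {c\<in>C. a \<le> f c \<and> f c \<le> b}) \<and>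
     (\<forall>c1\<in>C. \<forall>c2\<in>C. m c1 c2 \<noteq> 0 \<longrightarrow> f c1 < f c2) \<and>
     (\<forall>c1\<in>C. \<forall>c3\<in>C.
        (\<Sum>c2\<in>{c\<in>C. m c1 c \<noteq> 0 \<and> m c c3 \<noteq> 0}. m c1 c2 * m c2 c3) = 0)"

definition lev :: "'c set \<Rightarrow> ('c \<Rightarrow> real) \<Rightarrow> real \<Rightarrow> real \<Rightarrow> 'c set" where
  "lev C f a b = {c\<in>C. a \<le> f c \<and> f c \<le> b}"

definition CM :: "'c set \<Rightarrow> ('c \<Rightarrow> real) \<Rightarrow> real \<Rightarrow> real \<Rightarrow> ('c \<Rightarrow> int) set" where
  "CM C f a b = {x. \<forall>c. x c \<noteq> 0 \<longrightarrow> c \<in> lev C f a b}"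

definition bd :: "'c set \<Rightarrow> ('c \<Rightarrow> real) \<Rightarrow> ('c \<Rightarrow> 'c \<Rightarrow> int) \<Rightarrow> real \<Rightarrow> real
    \<Rightarrow> ('c \<Rightarrow> int) \<Rightarrow> ('c \<Rightarrow> int)" where
  "bd C f m a b x = (\<lambda>c'. if c' \<in> lev C f a b then (\<Sum>c\<in>lev C f a b. m c' c * x c) else 0)"

definition cycles where
  "cycles C f m a b = {x \<in> CM C f a b. bd C f m a b x = (\<lambda>_. 0)}"

definition boundaries where
  "boundaries C f m a b = bd C f m a b ` CM C f a b"

definition hcls where
  "hcls C f m a b x = {y \<in> cycles C f m a b. x - y \<in> boundaries C f m a b}"

definition HMab where
  "HMab C f m a b = cycles C f m a b //
     {(x, y). x \<in> cycles C f m a b \<and> y \<in> cycles C f m a b \<and> x - y \<in> boundaries C f m a b}"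

definition proj :: "('c \<Rightarrow> real) \<Rightarrow> real \<Rightarrow> ('c \<Rightarrow> int) \<Rightarrow> ('c \<Rightarrow> int)" where
  "proj f a2 x = (\<lambda>c. if f c \<ge> a2 then x c else 0)"

definition Hp where
  "Hp C f m b a2 a1 X = (\<Union>x\<in>X. hcls C f m a2 b (proj f a2 x))"

definition Hi where
  "Hi C f m a b2 b1 X = (\<Union>x\<in>X. hcls C f m a b2 x)"

definition invlim where
  "invlim C f m b = {xs :: real \<Rightarrow> ('c \<Rightarrow> int) set.
      (\<forall>a. xs a \<in> HMab C f m a b) \<and>
      (\<forall>a1 a2. a1 \<le> a2 \<longrightarrow> Hp C f m b a2 a1 (xs a1) = xs a2)}"

definition dlim_rel where
  "dlim_rel C f m = {((b1, xs), (b2, ys)).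
      xs \<in> invlim C f m b1 \<and> ys \<in> invlim C f m b2 \<and>
      (\<exists>b3. b1 \<le> b3 \<and> b2 \<le> b3 \<and>
         (\<lambda>a. Hi C f m a b3 b1 (xs a)) = (\<lambda>a. Hi C f m a b3 b2 (ys a)))}"

text \<open>\<open>HM-bar = lim_{b} lim_{a} HM_a^b\<close> (direct limit of inverse limits), and its zero.\<close>

definition HMbar where
  "HMbar C f m = (SIGMA b:UNIV. invlim C f m b) // dlim_rel C f m"

definition HMbar_zero where
  "HMbar_zero C f m = dlim_rel C f m `` {(0, \<lambda>a. hcls C f m a 0 (\<lambda>_. 0))}"

definition nov where
  "nov C f = {g :: 'c \<Rightarrow> int. (\<forall>c. g c \<noteq> 0 \<longrightarrow> c \<in> C) \<and>
      (\<forall>b. finite {c. g c \<noteq> 0 \<and> f c > b})}"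

definition nbd where
  "nbd C m g = (\<lambda>c'. if c' \<in> C then (\<Sum>c\<in>{c. g c \<noteq> 0 \<and> m c' c \<noteq> 0}. m c' c * g c) else 0)"

definition ncycles where
  "ncycles C f m = {g \<in> nov C f. nbd C m g = (\<lambda>_. 0)}"

definition nboundaries where
  "nboundaries C f m = nbd C m ` nov C f"

definition HMnov where
  "HMnov C f m = ncycles C f m //
     {(x, y). x \<in> ncycles C f m \<and> y \<in> ncycles C f m \<and> x - y \<in> nboundaries C f m}"

definition HMnov_zero where
  "HMnov_zero C f m = {y \<in> ncycles C f m. (\<lambda>_. 0) - y \<in> nboundaries C f m}"

text \<open>\<open>Up n\<close> is \<open>overline c_n\<close> (n \<ge> 0), \<open>Lo n\<close> is \<open>underline c_n\<close> (n \<ge> 1).\<close>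

datatype gen = Up nat | Lo nat

definition exC :: "gen set" where
  "exC = range Up \<union> Lo ` {n. n \<ge> 1}"

fun exf :: "gen \<Rightarrow> real" where
  "exf (Up n) = - real n"
| "exf (Lo n) = - real n - 1"

fun exm :: "gen \<Rightarrow> gen \<Rightarrow> int" where
  "exm (Lo n) (Up k) = (if n \<ge> 1 \<and> k = n - 1 then 1 else if n \<ge> 1 \<and> k = n then -2 else 0)"
| "exm _ _ = 0"

end

theory Submission
  imports Defs
begin

text \<open>
  Hence \<open>\<partial>\<^sub>a\<^sup>b\<close> vanishes on \<open>Lo\<close>-chains and \<open>(\<partial>w)(Lo n) = w(Up (n-1)) - 2 w(Up n)\<close>.

  A cycle \<open>y\<close> of \<open>CM\<^sub>a\<^sup>b\<close> satisfies \<open>y(Up k) = 2^j y(Up (k+j))\<close> as long as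
  the levels involved lie in \<open>[a,b]\<close>.  An element of \<open>lim\<^sub>a HM\<^sub>a\<^sup>b\<close> is represented at level
  \<open>a\<close> by projections of cycles from arbitrarily low levels, so its \<open>Up\<close>-coefficients are
  divisible by every power of 2 and vanish.  Once \<open>b \<ge> 0\<close> every \<open>Lo\<close>-chain is a boundary
  (solve \<open>w(Up (n-1)) - 2 w(Up n) = x(Lo n)\<close> downwards from the finite bottom), so every
  family becomes zero in the direct limit and \<open>HM-bar\<close> is a single point.

  The infinite cycle \<open>\<Sum> Lo (2k+1)\<close> is not a boundary: a preimage \<open>g\<close> would
  give an integer sequence \<open>d\<close> (an affine function of \<open>g(Up n)\<close>) with \<open>d n = 2 d (n+1)\<close>,
  forcing \<open>d 0 = 0\<close>, which is impossible as \<open>d 0 \<equiv> 2 mod 3\<close>.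
\<close>

section \<open>General facts about the truncated complexes\<close>

lemma lev_mem: "c \<in> lev C f a b \<longleftrightarrow> c \<in> C \<and> a \<le> f c \<and> f c \<le> b"
  by (simp add: lev_def)

lemma bd_out: "c \<notin> lev C f a b \<Longrightarrow> bd C f m a b w c = 0"
  by (simp add: bd_def)

lemma bd_diff: "bd C f m a b (x - y) = bd C f m a b x - bd C f m a b y"
  by (simp add: bd_def fun_eq_iff sum_subtractf right_diff_distrib)

lemma bd_zero: "bd C f m a b (\<lambda>_. 0) = (\<lambda>_. 0)"
  by (simp add: bd_def fun_eq_iff)

lemma CM_zero: "(\<lambda>_. 0) \<in> CM C f a b"
  by (simp add: CM_def)

lemma CM_diff:
  assumes "x \<in> CM C f a b" and "y \<in> CM C f a b"
  shows "x - y \<in> CM C f a b"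
proof -
  have "x c \<noteq> 0 \<or> y c \<noteq> 0" if "(x - y) c \<noteq> 0" for c
    using that by auto
  then show ?thesis using assms unfolding CM_def by blast
qed

lemma CM_mono_top: "x \<in> CM C f a b \<Longrightarrow> b \<le> b' \<Longrightarrow> x \<in> CM C f a b'"
  by (auto simp add: CM_def lev_mem)

lemma boundaries_zero: "(\<lambda>_. 0) \<in> boundaries C f m a b"
  unfolding boundaries_def using bd_zero[symmetric] CM_zero by (rule image_eqI)

lemma boundaries_diff:
  assumes "u \<in> boundaries C f m a b" and "v \<in> boundaries C f m a b"
  shows "u - v \<in> boundaries C f m a b"
proof -
  obtain x y where "x \<in> CM C f a b" "y \<in> CM C f a b"
    and "u = bd C f m a b x" "v = bd C f m a b y"
    using assms unfolding boundaries_def by blast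
  then have "u - v = bd C f m a b (x - y)" and "x - y \<in> CM C f a b"
    by (simp_all add: bd_diff CM_diff)
  then show ?thesis unfolding boundaries_def by blast
qed

lemma boundaries_neg: "u \<in> boundaries C f m a b \<Longrightarrow> (\<lambda>_. 0) - u \<in> boundaries C f m a b"
  using boundaries_diff[OF boundaries_zero] .

lemma cycles_zero: "(\<lambda>_. 0) \<in> cycles C f m a b"
  by (simp add: cycles_def CM_zero bd_zero)

lemma hcls_boundary:
  assumes x: "x \<in> boundaries C f m a b"
  shows "hcls C f m a b x = hcls C f m a b (\<lambda>_. 0)"
proof -
  have "x - y \<in> boundaries C f m a b \<longleftrightarrow> (\<lambda>_. 0) - y \<in> boundaries C f m a b" for y
  proof
    assume "x - y \<in> boundaries C f m a b"
    then have "(x - y) - x \<in> boundaries C f m a b" using x by (rule boundaries_diff)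
    moreover have "(x - y) - x = (\<lambda>_. 0) - y" by (simp add: fun_eq_iff)
    ultimately show "(\<lambda>_. 0) - y \<in> boundaries C f m a b" by simp
  next
    assume "(\<lambda>_. 0) - y \<in> boundaries C f m a b"
    then have "((\<lambda>_. 0) - y) - ((\<lambda>_. 0) - x) \<in> boundaries C f m a b"
      using boundaries_neg[OF x] by (rule boundaries_diff)
    moreover have "((\<lambda>_. 0) - y) - ((\<lambda>_. 0) - x) = x - y" by (simp add: fun_eq_iff)
    ultimately show "x - y \<in> boundaries C f m a b" by simp
  qed
  then show ?thesis by (simp add: hcls_def)
qed

lemma hcls_zero_mem: "(\<lambda>_. 0) \<in> hcls C f m a b (\<lambda>_. 0)"
proof -
  have "(\<lambda>_. 0) - (\<lambda>_. 0) \<in> boundaries C f m a b"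
    using boundaries_neg[OF boundaries_zero] .
  then show ?thesis by (simp add: hcls_def cycles_zero)
qed

lemma HMab_elem:
  assumes "X \<in> HMab C f m a b"
  shows "X \<noteq> {}" and "X \<subseteq> cycles C f m a b"
proof -
  obtain x where x: "x \<in> cycles C f m a b"
    and X: "X = {(x, y). x \<in> cycles C f m a b \<and> y \<in> cycles C f m a b
                  \<and> x - y \<in> boundaries C f m a b} `` {x}"
    using assms unfolding HMab_def by (auto elim!: quotientE)
  have "x - x = (\<lambda>_. 0)" by (simp add: fun_eq_iff)
  then have "x \<in> X" using X x boundaries_zero by simp
  then show "X \<noteq> {}" by blast
  show "X \<subseteq> cycles C f m a b" using X by auto
qed

lemma hcls_in_HMab:
  assumes "x \<in> cycles C f m a b"
  shows "hcls C f m a b x \<in> HMab C f m a b"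
proof -
  have "hcls C f m a b x = {(x, y). x \<in> cycles C f m a b \<and> y \<in> cycles C f m a b
                               \<and> x - y \<in> boundaries C f m a b} `` {x}"
    using assms by (auto simp add: hcls_def)
  then show ?thesis unfolding HMab_def using assms by (simp only:) (rule quotientI)
qed

lemma floer_finite_lev:
  assumes "floer_triple C f m"
  shows "finite (lev C f a b)"
proof (cases "a \<le> b")
  case True
  then show ?thesis using assms by (simp add: floer_triple_def lev_def)
next
  case False
  then have "lev C f a b = {}" by (auto simp add: lev_def)
  then show ?thesis by simp
qed

text \<open>
  The projection \<open>p\<^sup>b\<^sub>a\<^sub>2\<^sub>,\<^sub>a\<^sub>1\<close> is a chain map: the boundary only decreases \<open>f\<close>, so
  generators cut off by the projection never contribute to surviving ones.
\<close>

lemma proj_bd: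
  assumes F: "floer_triple C f m" and a: "a1 \<le> a2"
  shows "bd C f m a2 b (proj f a2 w) = proj f a2 (bd C f m a1 b w)"
proof
  fix c'
  show "bd C f m a2 b (proj f a2 w) c' = proj f a2 (bd C f m a1 b w) c'"
  proof (cases "c' \<in> lev C f a2 b")
    case True
    then have c': "c' \<in> C" "a2 \<le> f c'" "c' \<in> lev C f a1 b"
      using a by (auto simp add: lev_mem)
    have decr: "\<forall>c1\<in>C. \<forall>c2\<in>C. m c1 c2 \<noteq> 0 \<longrightarrow> f c1 < f c2"
      using F by (simp add: floer_triple_def)
    have fin: "finite (lev C f a1 b)" and sub: "lev C f a2 b \<subseteq> lev C f a1 b"
      using floer_finite_lev[OF F] a by (auto simp add: lev_def)
    have cut: "m c' c = 0" if c: "c \<in> lev C f a1 b - lev C f a2 b" for c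
    proof (rule ccontr)
      assume "m c' c \<noteq> 0"
      then have "f c' < f c" using decr c' c by (auto simp add: lev_mem)
      then show False using c c' by (auto simp add: lev_mem)
    qed
    have "bd C f m a2 b (proj f a2 w) c' = (\<Sum>c\<in>lev C f a2 b. m c' c * w c)"
      using True by (auto simp add: bd_def proj_def lev_mem intro!: sum.cong)
    also have "\<dots> = (\<Sum>c\<in>lev C f a1 b. m c' c * w c)"
      using cut by (intro sum.mono_neutral_left fin sub) simp
    also have "\<dots> = proj f a2 (bd C f m a1 b w) c'"
      using c' by (simp add: bd_def proj_def)
    finally show ?thesis .
  next
    case False
    then show ?thesis by (auto simp add: bd_def proj_def lev_mem)
  qed
qed

lemma proj_boundary:
  assumes "floer_triple C f m" and "a1 \<le> a2" and "y \<in> boundaries C f m a1 b"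
  shows "proj f a2 y \<in> boundaries C f m a2 b"
proof -
  obtain w where w: "w \<in> CM C f a1 b" and y: "y = bd C f m a1 b w"
    using assms(3) unfolding boundaries_def by blast
  have "proj f a2 w \<in> CM C f a2 b"
    unfolding CM_def
  proof (intro CollectI allI impI)
    fix c assume "proj f a2 w c \<noteq> 0"
    then have "w c \<noteq> 0" and "a2 \<le> f c" by (auto simp add: proj_def split: if_splits)
    then show "c \<in> lev C f a2 b" using w by (auto simp add: CM_def lev_mem)
  qed
  moreover have "proj f a2 y = bd C f m a2 b (proj f a2 w)"
    unfolding y by (rule proj_bd[OF assms(1,2), symmetric])
  ultimately show ?thesis unfolding boundaries_def by (metis image_eqI)
qed

lemma zero_family_invlim:
  assumes F: "floer_triple C f m"
  shows "(\<lambda>a. hcls C f m a b (\<lambda>_. 0)) \<in> invlim C f m b"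
proof -
  have "Hp C f m b a2 a1 (hcls C f m a1 b (\<lambda>_. 0)) = hcls C f m a2 b (\<lambda>_. 0)"
    if a: "a1 \<le> a2" for a1 a2
    unfolding Hp_def
  proof (rule SUP_eq_const)
    show "hcls C f m a1 b (\<lambda>_. 0) \<noteq> {}" using hcls_zero_mem by blast
    fix y assume "y \<in> hcls C f m a1 b (\<lambda>_. 0)"
    then have "(\<lambda>_. 0) - y \<in> boundaries C f m a1 b" by (simp add: hcls_def)
    then have "(\<lambda>_. 0) - ((\<lambda>_. 0) - y) \<in> boundaries C f m a1 b" by (rule boundaries_neg)
    moreover have "(\<lambda>_. 0) - ((\<lambda>_. 0) - y) = y" by (simp add: fun_eq_iff)
    ultimately have "y \<in> boundaries C f m a1 b" by simp
    then show "hcls C f m a2 b (proj f a2 y) = hcls C f m a2 b (\<lambda>_. 0)"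
      by (intro hcls_boundary proj_boundary[OF F a])
  qed
  moreover have "hcls C f m a b (\<lambda>_. 0) \<in> HMab C f m a b" for a
    by (rule hcls_in_HMab[OF cycles_zero])
  ultimately show ?thesis unfolding invlim_def by blast
qed

lemma invlim_lift:
  assumes xs: "xs \<in> invlim C f m b" and x: "x \<in> xs a" and a: "a1 \<le> a"
  obtains y where "y \<in> cycles C f m a1 b" and "proj f a y - x \<in> boundaries C f m a b"
proof -
  have "Hp C f m b a a1 (xs a1) = xs a" and X: "xs a1 \<in> HMab C f m a1 b"
    using xs a by (simp_all add: invlim_def)
  with x obtain y where y: "y \<in> xs a1" and xy: "x \<in> hcls C f m a b (proj f a y)"
    by (auto simp add: Hp_def)
  have "y \<in> cycles C f m a1 b" using HMab_elem(2)[OF X] y by blast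
  moreover have "proj f a y - x \<in> boundaries C f m a b"
    using xy by (simp add: hcls_def)
  ultimately show ?thesis by (rule that)
qed

lemma pow2_dvd_all_zero:
  fixes z :: int
  assumes "\<And>j::nat. 2 ^ j dvd z"
  shows "z = 0"
proof (rule ccontr)
  assume nz: "z \<noteq> 0"
  let ?n = "nat \<bar>z\<bar>"
  have "\<bar>2 ^ ?n\<bar> \<le> \<bar>z\<bar>" using assms dvd_imp_le_int nz by blast
  moreover have "int ?n < 2 ^ ?n"
    using less_exp[of ?n] by (metis of_nat_less_iff of_nat_numeral of_nat_power)
  ultimately show False by simp
qed

lemma doubling_recurrence_solution:
  fixes x :: "nat \<Rightarrow> int" and K :: nat
  defines "s k \<equiv> \<Sum>m\<in>{Suc k..K}. 2 ^ (m - Suc k) * x m"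
  assumes "1 \<le> n" and "n \<le> K"
  shows "s (n - 1) - 2 * s n = x n"
proof -
  have "s (n - 1) = x n + (\<Sum>m\<in>{Suc n..K}. 2 ^ (m - n) * x m)"
    unfolding s_def using assms(2,3) by (simp add: sum.atLeast_Suc_atMost)
  moreover have "2 * s n = (\<Sum>m\<in>{Suc n..K}. 2 ^ (m - n) * x m)"
    unfolding s_def sum_distrib_left
  proof (rule sum.cong)
    fix m assume "m \<in> {Suc n..K}"
    then have "m - n = Suc (m - Suc n)" by auto
    then show "2 * (2 ^ (m - Suc n) * x m) = 2 ^ (m - n) * x m" by simp
  qed simp
  ultimately show ?thesis by simp
qed

lemma exC_Up [simp]: "Up k \<in> exC"
  by (simp add: exC_def)

lemma exC_Lo [simp]: "Lo n \<in> exC \<longleftrightarrow> n \<ge> 1"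
  by (auto simp add: exC_def)

lemma lev_bounded: "lev exC exf a b \<subseteq> Up ` {..nat \<lceil>-a\<rceil>} \<union> Lo ` {..nat \<lceil>-a\<rceil>}"
proof
  fix c assume c: "c \<in> lev exC exf a b"
  show "c \<in> Up ` {..nat \<lceil>-a\<rceil>} \<union> Lo ` {..nat \<lceil>-a\<rceil>}"
  proof (cases c)
    case (Up k)
    with c have "k \<le> nat \<lceil>-a\<rceil>" by (simp add: lev_mem) linarith
    then show ?thesis using Up by auto
  next
    case (Lo k)
    with c have "k \<le> nat \<lceil>-a\<rceil>" by (simp add: lev_mem) linarith
    then show ?thesis using Lo by auto
  qed
qed

lemma finite_lev: "finite (lev exC exf a b)"
  using lev_bounded by (rule finite_subset) auto

text \<open>No generator is both hit and hitting, so \<open>\<partial>\<^sup>2 = 0\<close> holds trivially.\<close>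

lemma floer_example: "floer_triple exC exf exm"
proof -
  have "exm c1 c2 \<noteq> 0 \<longrightarrow> exf c1 < exf c2" for c1 c2
    by (cases c1; cases c2) (auto split: if_splits)
  moreover have no_composites: "{c\<in>exC. exm c1 c \<noteq> 0 \<and> exm c c3 \<noteq> 0} = {}" for c1 c3
  proof -
    have "exm c1 c = 0 \<or> exm c c3 = 0" for c by (cases c) auto
    then show ?thesis by auto
  qed
  ultimately show ?thesis
    using finite_lev unfolding floer_triple_def lev_def no_composites by auto
qed

lemma exm_Lo_sum:
  assumes "n \<ge> 1" and "finite S" and "Up (n - 1) \<in> S" and "Up n \<in> S"
  shows "(\<Sum>c\<in>S. exm (Lo n) c * w c) = w (Up (n - 1)) - 2 * w (Up n)"
proof -
  have "(\<Sum>c\<in>S. exm (Lo n) c * w c) = (\<Sum>c\<in>{Up (n - 1), Up n}. exm (Lo n) c * w c)"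
  proof (rule sum.mono_neutral_right[OF assms(2)])
    show "{Up (n - 1), Up n} \<subseteq> S" using assms(3,4) by simp
    have "exm (Lo n) c = 0" if "c \<notin> {Up (n - 1), Up n}" for c
      using that by (cases c) auto
    then show "\<forall>c\<in>S - {Up (n - 1), Up n}. exm (Lo n) c * w c = 0" by simp
  qed
  also have "\<dots> = w (Up (n - 1)) - 2 * w (Up n)"
  proof -
    have "n - 1 \<noteq> n" using assms(1) by simp
    then show ?thesis using assms(1) by simp
  qed
  finally show ?thesis .
qed

lemma bd_Up: "bd exC exf exm a b w (Up k) = 0"
  by (simp add: bd_def)

lemma bd_Lo:
  assumes "Lo n \<in> lev exC exf a b" and "Up (n - 1) \<in> lev exC exf a b" and "Up n \<in> lev exC exf a b"
  shows "bd exC exf exm a b w (Lo n) = w (Up (n - 1)) - 2 * w (Up n)"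
  using assms exm_Lo_sum[OF _ finite_lev] by (simp add: bd_def lev_mem)

lemma boundary_Up: "z \<in> boundaries exC exf exm a b \<Longrightarrow> z (Up k) = 0"
  unfolding boundaries_def using bd_Up by auto

subsection \<open>The truncated homology and its limits\<close>

lemma cycle_Up_doubling:
  assumes y: "y \<in> cycles exC exf exm a b" and kb: "- real k \<le> b"
  shows "a \<le> - real k - real j - 1 \<Longrightarrow> y (Up k) = 2 ^ j * y (Up (k + j))"
proof (induction j)
  case 0
  then show ?case by simp
next
  case (Suc j)
  let ?n = "Suc (k + j)"
  have "bd exC exf exm a b y (Lo ?n) = 0" using y by (simp add: cycles_def)
  moreover have "bd exC exf exm a b y (Lo ?n) = y (Up (?n - 1)) - 2 * y (Up ?n)"
    using Suc.prems kb by (intro bd_Lo) (simp_all add: lev_mem)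
  ultimately show ?case using Suc by simp
qed

lemma invlim_Up_zero:
  assumes xs: "xs \<in> invlim exC exf exm b" and x: "x \<in> xs a"
  shows "x (Up k) = 0"
proof (cases "Up k \<in> lev exC exf a b")
  case False
  have "x \<in> cycles exC exf exm a b" using HMab_elem(2) xs x by (fastforce simp add: invlim_def)
  then show ?thesis using False by (auto simp add: cycles_def CM_def)
next
  case True
  then have ak: "a \<le> - real k" and kb: "- real k \<le> b" by (auto simp add: lev_mem)
  have "2 ^ j dvd x (Up k)" for j
  proof -
    obtain y where y: "y \<in> cycles exC exf exm (a - real j - 1) b"
      and yx: "proj exf a y - x \<in> boundaries exC exf exm a b"
      using invlim_lift[OF xs x, of "a - real j - 1"] by auto
    have "x (Up k) = y (Up k)"
      using boundary_Up[OF yx, of k] ak by (simp add: proj_def)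
    also have "\<dots> = 2 ^ j * y (Up (k + j))"
      using cycle_Up_doubling[OF y kb] ak by simp
    finally show ?thesis by simp
  qed
  then show ?thesis by (rule pow2_dvd_all_zero)
qed

lemma Lo_chain_boundary:
  assumes x: "x \<in> CM exC exf a b" and b: "0 \<le> b" and xU: "\<And>k. x (Up k) = 0"
  shows "x \<in> boundaries exC exf exm a b"
proof -
  define K where "K = nat \<lceil>-a\<rceil>"
  define s where "s k = (\<Sum>m\<in>{Suc k..K}. 2 ^ (m - Suc k) * x (Lo m))" for k
  define w where "w c = (case c of Up k \<Rightarrow> if Up k \<in> lev exC exf a b then s k else 0
                                | Lo _ \<Rightarrow> 0)" for c
  have w: "w \<in> CM exC exf a b"
    unfolding CM_def w_def by (auto split: gen.splits if_splits)
  have "bd exC exf exm a b w c = x c" for c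
  proof (cases c)
    case (Up k)
    then show ?thesis using bd_Up xU by simp
  next
    case (Lo n)
    show ?thesis
    proof (cases "c \<in> lev exC exf a b")
      case False
      then show ?thesis using x bd_out[OF False] by (auto simp add: CM_def)
    next
      case True
      with Lo have n: "1 \<le> n" "a \<le> - real n - 1" by (auto simp add: lev_mem)
      then have U: "Up (n - 1) \<in> lev exC exf a b" "Up n \<in> lev exC exf a b"
        using b by (simp_all add: lev_mem)
      have "n \<le> K" unfolding K_def using n by linarith
      then have "s (n - 1) - 2 * s n = x (Lo n)"
        unfolding s_def using doubling_recurrence_solution[of n K] n by simp
      then show ?thesis using bd_Lo[OF True[unfolded Lo] U] U Lo by (simp add: w_def)
    qed
  qed
  then show ?thesis unfolding boundaries_def using w by (auto intro!: image_eqI[of _ _ w])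
qed

lemma invlim_dies:
  assumes xs: "xs \<in> invlim exC exf exm b" and "b \<le> b'" and "0 \<le> b'"
  shows "Hi exC exf exm a b' b (xs a) = hcls exC exf exm a b' (\<lambda>_. 0)"
proof -
  have X: "xs a \<in> HMab exC exf exm a b" using xs by (simp add: invlim_def)
  have "hcls exC exf exm a b' x = hcls exC exf exm a b' (\<lambda>_. 0)" if x: "x \<in> xs a" for x
  proof -
    have "x \<in> CM exC exf a b"
      using HMab_elem(2)[OF X] x by (auto simp add: cycles_def)
    then have "x \<in> CM exC exf a b'" using assms(2) by (rule CM_mono_top)
    then show ?thesis
      using Lo_chain_boundary assms(3) invlim_Up_zero[OF xs x] hcls_boundary by blast
  qed
  then show ?thesis using HMab_elem(1)[OF X] unfolding Hi_def by simp
qed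

lemma quotient_single_class:
  assumes "A \<noteq> {}" and "\<And>p. p \<in> A \<Longrightarrow> r `` {p} = A"
  shows "A // r = {A}"
  using assms unfolding quotient_def by auto

lemma HMbar_single: "HMbar exC exf exm = {HMbar_zero exC exf exm}"
proof -
  let ?A = "SIGMA b:UNIV. invlim exC exf exm b"
  let ?r = "dlim_rel exC exf exm"
  have all_related: "?r `` {p} = ?A" if "p \<in> ?A" for p
  proof
    show "?r `` {p} \<subseteq> ?A" by (auto simp add: dlim_rel_def)
    obtain b1 xs where p: "p = (b1, xs)" and xs: "xs \<in> invlim exC exf exm b1"
      using \<open>p \<in> ?A\<close> by auto
    show "?A \<subseteq> ?r `` {p}"
    proof
      fix q assume "q \<in> ?A"
      then obtain b2 ys where q: "q = (b2, ys)" and ys: "ys \<in> invlim exC exf exm b2" by auto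
      let ?b3 = "max (max b1 b2) 0"
      have "(\<lambda>a. Hi exC exf exm a ?b3 b1 (xs a)) = (\<lambda>a. Hi exC exf exm a ?b3 b2 (ys a))"
        using invlim_dies[OF xs, of ?b3] invlim_dies[OF ys, of ?b3] by simp
      then show "q \<in> ?r `` {p}"
        unfolding p q dlim_rel_def using xs ys by (auto intro!: exI[of _ ?b3])
    qed
  qed
  have zero: "(0, \<lambda>a. hcls exC exf exm a 0 (\<lambda>_. 0)) \<in> ?A"
    using zero_family_invlim[OF floer_example] by (rule SigmaI[OF UNIV_I])
  then have "?A \<noteq> {}" by blast
  then have "HMbar exC exf exm = {?A}"
    unfolding HMbar_def using all_related by (rule quotient_single_class)
  moreover have "HMbar_zero exC exf exm = ?A"
    unfolding HMbar_zero_def using all_related[OF zero] .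
  ultimately show ?thesis by simp
qed

subsection \<open>The Novikov homology\<close>

lemma nbd_Lo:
  assumes "n \<ge> 1"
  shows "nbd exC exm g (Lo n) = g (Up (n - 1)) - 2 * g (Up n)"
proof -
  let ?S = "{c. g c \<noteq> 0 \<and> exm (Lo n) c \<noteq> 0}"
  have "exm (Lo n) c = 0" if "c \<notin> {Up (n - 1), Up n}" for c
    using that by (cases c) auto
  then have "?S \<subseteq> {Up (n - 1), Up n}" by blast
  then have "(\<Sum>c\<in>?S. exm (Lo n) c * g c) = (\<Sum>c\<in>{Up (n - 1), Up n}. exm (Lo n) c * g c)"
    by (intro sum.mono_neutral_left) auto
  also have "\<dots> = g (Up (n - 1)) - 2 * g (Up n)"
    using exm_Lo_sum[OF assms, of "{Up (n - 1), Up n}"] by simp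
  finally show ?thesis using assms by (simp add: nbd_def)
qed

lemma nbd_Lo_chain:
  assumes "\<And>n. g (Up n) = 0"
  shows "nbd exC exm g = (\<lambda>_. 0)"
proof
  fix c'
  have "g c = 0 \<or> exm c' c = 0" for c using assms by (cases c) auto
  then have no_terms: "{c. g c \<noteq> 0 \<and> exm c' c \<noteq> 0} = {}" by auto
  show "nbd exC exm g c' = 0" unfolding nbd_def no_terms by simp
qed

definition odd_Lo :: "gen \<Rightarrow> int" where
  "odd_Lo c = (case c of Lo n \<Rightarrow> if odd n then 1 else 0 | Up _ \<Rightarrow> 0)"

lemma odd_Lo_nov: "odd_Lo \<in> nov exC exf"
proof -
  have "{c. odd_Lo c \<noteq> 0 \<and> exf c > b} \<subseteq> Lo ` {..nat \<lceil>-b\<rceil>}" for b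
  proof
    fix c assume c: "c \<in> {c. odd_Lo c \<noteq> 0 \<and> exf c > b}"
    then obtain n where n: "c = Lo n" by (cases c) (auto simp add: odd_Lo_def)
    with c have "n \<le> nat \<lceil>-b\<rceil>" by simp linarith
    then show "c \<in> Lo ` {..nat \<lceil>-b\<rceil>}" using n by auto
  qed
  then have "finite {c. odd_Lo c \<noteq> 0 \<and> exf c > b}" for b by (rule finite_subset) auto
  moreover have "odd_Lo c \<noteq> 0 \<longrightarrow> c \<in> exC" for c
    by (cases c) (auto simp add: odd_Lo_def elim: oddE)
  ultimately show ?thesis by (simp add: nov_def)
qed

lemma odd_Lo_cycle: "odd_Lo \<in> ncycles exC exf exm"
  using odd_Lo_nov nbd_Lo_chain[of odd_Lo] by (simp add: ncycles_def odd_Lo_def)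

lemma zero_ncycle: "(\<lambda>_. 0) \<in> ncycles exC exf exm"
  using nbd_Lo_chain[of "\<lambda>_. 0"] by (simp add: ncycles_def nov_def)

text \<open>
  \<open>odd_Lo\<close> is not a boundary: from \<open>\<partial>g = -odd_Lo\<close>, \<open>d n = 3 g(Up n) - (1 or 2)\<close> (by parity
  of \<open>n\<close>) satisfies \<open>d n = 2 d (n+1)\<close>, so \<open>d 0\<close> is divisible by all powers of 2, but \<open>d 0 \<equiv> 2 mod 3\<close>.
\<close>

lemma odd_Lo_not_boundary: "(\<lambda>_. 0) - odd_Lo \<notin> nboundaries exC exf exm"
proof
  assume "(\<lambda>_. 0) - odd_Lo \<in> nboundaries exC exf exm"
  then obtain g where g: "nbd exC exm g = (\<lambda>_. 0) - odd_Lo"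
    by (auto simp add: nboundaries_def)
  define d where "d n = 3 * g (Up n) - (if even n then 1 else 2)" for n
  have step: "d n = 2 * d (Suc n)" for n
  proof -
    have "nbd exC exm g (Lo (Suc n)) = - odd_Lo (Lo (Suc n))" using g by simp
    then show ?thesis using nbd_Lo[of "Suc n" g] by (auto simp add: d_def odd_Lo_def)
  qed
  have "d 0 = 2 ^ j * d j" for j
  proof (induction j)
    case (Suc j)
    then show ?case using step[of j] by simp
  qed simp
  then have "d 0 = 0" by (intro pow2_dvd_all_zero) (metis dvd_triv_left)
  then show False by (simp add: d_def) presburger
qed

lemma HMnov_two_classes:
  obtains X where "X \<in> HMnov exC exf exm" and "HMnov_zero exC exf exm \<in> HMnov exC exf exm"
    and "X \<noteq> HMnov_zero exC exf exm"
proof -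
  let ?R = "{(x, y). x \<in> ncycles exC exf exm \<and> y \<in> ncycles exC exf exm
                     \<and> x - y \<in> nboundaries exC exf exm}"
  have class_mem: "?R `` {x} \<in> HMnov exC exf exm" if "x \<in> ncycles exC exf exm" for x
    unfolding HMnov_def using that by (rule quotientI)
  have "(\<lambda>_. 0) \<in> nov exC exf" and "nbd exC exm (\<lambda>_. 0) = (\<lambda>_. 0)"
    using zero_ncycle by (simp_all add: ncycles_def)
  then have zero_bd: "(\<lambda>_. 0) \<in> nboundaries exC exf exm"
    unfolding nboundaries_def by (metis image_eqI)
  have "odd_Lo - odd_Lo = (\<lambda>_. 0)" by (simp add: fun_eq_iff)
  then have "odd_Lo \<in> ?R `` {odd_Lo}" using odd_Lo_cycle zero_bd by simp
  moreover have "odd_Lo \<notin> HMnov_zero exC exf exm"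
    using odd_Lo_not_boundary by (simp add: HMnov_zero_def)
  ultimately have "?R `` {odd_Lo} \<noteq> HMnov_zero exC exf exm" by blast
  moreover have "?R `` {\<lambda>_. 0} = HMnov_zero exC exf exm"
    using zero_ncycle by (auto simp add: HMnov_zero_def fun_diff_def)
  ultimately show ?thesis
    using that class_mem[OF odd_Lo_cycle] class_mem[OF zero_ncycle] by simp
qed

theorem mainTheorem9:
  shows "floer_triple exC exf exm \<and>
         HMbar exC exf exm = {HMbar_zero exC exf exm} \<and>
         HMnov exC exf exm \<noteq> {HMnov_zero exC exf exm} \<and>
         \<not> (\<exists>h. bij_betw h (HMbar exC exf exm) (HMnov exC exf exm))"
proof -
  obtain X where X: "X \<in> HMnov exC exf exm" "HMnov_zero exC exf exm \<in> HMnov exC exf exm"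
    "X \<noteq> HMnov_zero exC exf exm"
    using HMnov_two_classes by blast
  have "\<not> (\<exists>h. bij_betw h (HMbar exC exf exm) (HMnov exC exf exm))"
  proof
    assume "\<exists>h. bij_betw h (HMbar exC exf exm) (HMnov exC exf exm)"
    then obtain h where "HMnov exC exf exm = h ` HMbar exC exf exm"
      by (auto simp add: bij_betw_def)
    then have "HMnov exC exf exm = {h (HMbar_zero exC exf exm)}"
      using HMbar_single by simp
    then show False using X by auto
  qed
  then show ?thesis using floer_example HMbar_single X by auto
qed

end
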